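(* In the planted clique setting below with $\rho\in(0,1)$, the vector $w$ satisfies $w_0=\rho$ and, for every graph $\alpha$ with $|\alpha|\ge1$, \[ |w_\alpha|\le(|\alpha|+1)^{|\alpha|}(1-\rho)^{-2|\alpha|^2}\rho^{|V(\alpha)|}. \]
   Context: Let $v\in\{0,1\}^n$ have i.i.d. $\mathrm{Bernoulli}(\rho)$ entries and let the clique edge set be $X=\{\{i,j\}: i<j,\ v_iv_j=1\}$. Index vectors $\alpha\in\{0,1\}^{\binom n2}$ are identified with (simple) graphs on vertex set $[n]$; $|\alpha|$ is the number of edges, $V(\alpha)$ the set of vertices spanned by the edges, $\beta\le\alpha$ means $\beta$ is a subgraph of $\alpha$ (edge sets), and $\beta\lneq\alpha$ means a proper subgraph. Define $c_\alpha=\rho^{|V(\alpha)\cup\{1\}|}$ and $M_{\beta\alpha}=\mathbf{1}_{\beta\le\alpha}\Pr[\alpha\setminus X=\beta]$, where $\alpha\setminus X$ is the set of edges of $\alpha$ that are not in $X$. Define $w_\alpha$ recursively (over graphs of increasing size) by $w_\alpha=\frac{1}{M_{\alpha\alpha}}\big(c_\alpha-\sum_{\beta\lneq\alpha}w_\beta M_{\beta\alpha}\big)$. *)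

theory Defs
  imports "HOL-Probability.Probability"
begin

definition all_edges :: "nat \<Rightarrow> nat set set" where
  "all_edges n = {{i, j} | i j. 1 \<le> i \<and> i < j \<and> j \<le> n}"

definition is_graph :: "nat \<Rightarrow> nat set set \<Rightarrow> bool" where
  "is_graph n \<alpha> \<longleftrightarrow> \<alpha> \<subseteq> all_edges n"

definition verts :: "nat set set \<Rightarrow> nat set" where
  "verts \<alpha> = \<Union>\<alpha>"

definition vdist :: "nat \<Rightarrow> real \<Rightarrow> (nat \<Rightarrow> bool) pmf" where
  "vdist n \<rho> = Pi_pmf {1..n} False (\<lambda>_. bernoulli_pmf \<rho>)"

definition clique_edges :: "nat \<Rightarrow> (nat \<Rightarrow> bool) \<Rightarrow> nat set set" where
  "clique_edges n v = {{i, j} | i j. 1 \<le> i \<and> i < j \<and> j \<le> n \<and> v i \<and> v j}"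

definition cvec :: "real \<Rightarrow> nat set set \<Rightarrow> real" where
  "cvec \<rho> \<alpha> = \<rho> ^ card (verts \<alpha> \<union> {1})"

definition Mmat :: "nat \<Rightarrow> real \<Rightarrow> nat set set \<Rightarrow> nat set set \<Rightarrow> real" where
  "Mmat n \<rho> \<beta> \<alpha> = (if \<beta> \<subseteq> \<alpha>
     then measure_pmf.prob (vdist n \<rho>) {v. \<alpha> - clique_edges n v = \<beta>} else 0)"

function wvec :: "nat \<Rightarrow> real \<Rightarrow> nat set set \<Rightarrow> real" where
  "wvec n \<rho> \<alpha> = (if finite \<alpha> then
     (cvec \<rho> \<alpha> - (\<Sum>\<beta>\<in>{\<beta>. \<beta> \<subset> \<alpha>}. wvec n \<rho> \<beta> * Mmat n \<rho> \<beta> \<alpha>)) / Mmat n \<rho> \<alpha> \<alpha>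
   else 0)"
  by auto
termination
  by (relation "Wellfounded.measure (\<lambda>(n, \<rho>, \<alpha>). card \<alpha>)") (auto intro: psubset_card_mono)

end

theory Submission
  imports Defs
begin

text \<open>The diagonal entry \<open>M\<^sub>\<alpha>\<^sub>\<alpha>\<close> is at least the
  probability that no vertex of \<open>\<alpha>\<close> is in the clique, i.e. \<open>(1 - \<rho>)\<^bsup>|V(\<alpha>)|\<^esup> \<ge> (1 - \<rho>)\<^bsup>2|\<alpha>|\<^esup>\<close>,
  while \<open>M\<^sub>\<beta>\<^sub>\<alpha>\<close> is at most the probability \<open>\<rho>\<^bsup>|V(\<alpha> - \<beta>)|\<^esup>\<close> that every vertex of \<open>\<alpha> - \<beta>\<close> is in the
  clique. Since \<open>V(\<alpha>) = V(\<beta>) \<union> V(\<alpha> - \<beta>)\<close>, each term \<open>w\<^sub>\<beta> M\<^sub>\<beta>\<^sub>\<alpha>\<close> of the recursion carries the factor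
  \<open>\<rho>\<^bsup>|V(\<alpha>)|\<^esup>\<close>, and summing the inductive bounds over \<open>\<beta> \<subset> \<alpha>\<close> by the binomial theorem gives the
  factor \<open>(|\<alpha>| + 1)\<^bsup>|\<alpha>|\<^esup>\<close>.\<close>

lemma prob_vdist_coords_in:
  assumes "S \<subseteq> {1..n}"
  shows "measure_pmf.prob (vdist n \<rho>) {v. \<forall>i\<in>S. v i \<in> B}
           = measure_pmf.prob (bernoulli_pmf \<rho>) B ^ card S"
proof -
  have "{v. \<forall>i\<in>S. v i \<in> B} = Pi {1..n} (\<lambda>i. if i \<in> S then B else UNIV)"
    using assms by (auto simp: Pi_def)
  then have "measure_pmf.prob (vdist n \<rho>) {v. \<forall>i\<in>S. v i \<in> B}
      = (\<Prod>i\<in>{1..n}. measure_pmf.prob (bernoulli_pmf \<rho>) (if i \<in> S then B else UNIV))"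
    unfolding vdist_def by (simp add: measure_Pi_pmf_Pi)
  also have "\<dots> = (\<Prod>i\<in>{1..n}. if i \<in> S then measure_pmf.prob (bernoulli_pmf \<rho>) B else 1)"
    by (intro prod.cong) auto
  also have "\<dots> = measure_pmf.prob (bernoulli_pmf \<rho>) B ^ card S"
    using assms by (simp add: prod.If_cases Int_absorb1)
  finally show ?thesis .
qed

lemma sum_psubset_power_card:
  fixes x :: "'a :: comm_ring_1"
  assumes "finite A"
  shows "(\<Sum>B\<in>{B. B \<subset> A}. x ^ card B) = (x + 1) ^ card A - x ^ card A"
proof -
  have "(x + 1) ^ card A = (\<Sum>B\<in>Pow A. x ^ card B)"
    using prod_add[OF assms, of "\<lambda>_. x" "\<lambda>_. 1"] by simp
  also have "Pow A = insert A {B. B \<subset> A}" by auto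
  also have "(\<Sum>B\<in>insert A {B. B \<subset> A}. x ^ card B) = x ^ card A + (\<Sum>B\<in>{B. B \<subset> A}. x ^ card B)"
    using assms by (subst sum.insert) (auto intro: finite_subset[of _ "Pow A"])
  finally show ?thesis by simp
qed

lemma finite_graph: "is_graph n \<alpha> \<Longrightarrow> finite \<alpha>"
proof -
  have "all_edges n \<subseteq> Pow {1..n}" by (auto simp: all_edges_def)
  then show "is_graph n \<alpha> \<Longrightarrow> finite \<alpha>"
    unfolding is_graph_def by (meson finite_Pow_iff finite_atLeastAtMost finite_subset)
qed

lemma verts_graph_subset: "is_graph n \<alpha> \<Longrightarrow> verts \<alpha> \<subseteq> {1..n}"
  by (auto simp: is_graph_def verts_def all_edges_def)

lemma finite_verts_graph: "is_graph n \<alpha> \<Longrightarrow> finite (verts \<alpha>)"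
  using verts_graph_subset finite_subset by blast

lemma card_verts_graph_le: "is_graph n \<alpha> \<Longrightarrow> card (verts \<alpha>) \<le> 2 * card \<alpha>"
proof -
  assume "is_graph n \<alpha>"
  then have "\<forall>e\<in>\<alpha>. card e = 2" by (auto simp: is_graph_def all_edges_def)
  then show ?thesis
    using card_Union_le_sum_card[of \<alpha>] by (simp add: verts_def)
qed

lemma is_graph_mono: "is_graph n \<alpha> \<Longrightarrow> \<beta> \<subseteq> \<alpha> \<Longrightarrow> is_graph n \<beta>"
  by (auto simp: is_graph_def)

lemma Mmat_diag_ge:
  assumes "is_graph n \<alpha>" and "0 \<le> \<rho>" "\<rho> \<le> 1"
  shows "(1 - \<rho>) ^ card (verts \<alpha>) \<le> Mmat n \<rho> \<alpha> \<alpha>"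
proof -
  have "{v. \<forall>i\<in>verts \<alpha>. v i \<in> {False}} \<subseteq> {v. \<alpha> - clique_edges n v = \<alpha>}"
    by (auto simp: verts_def clique_edges_def)
  then have "measure_pmf.prob (vdist n \<rho>) {v. \<forall>i\<in>verts \<alpha>. v i \<in> {False}} \<le> Mmat n \<rho> \<alpha> \<alpha>"
    unfolding Mmat_def by (simp add: measure_pmf.finite_measure_mono)
  moreover have "measure_pmf.prob (vdist n \<rho>) {v. \<forall>i\<in>verts \<alpha>. v i \<in> {False}} = (1 - \<rho>) ^ card (verts \<alpha>)"
    using assms by (simp only: prob_vdist_coords_in verts_graph_subset) (simp add: measure_pmf_single)
  ultimately show ?thesis by simp
qed

lemma Mmat_le:
  assumes "is_graph n \<alpha>" and "\<beta> \<subseteq> \<alpha>" and "0 \<le> \<rho>" "\<rho> \<le> 1"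
  shows "Mmat n \<rho> \<beta> \<alpha> \<le> \<rho> ^ card (verts (\<alpha> - \<beta>))"
proof -
  have "{v. \<alpha> - clique_edges n v = \<beta>} \<subseteq> {v. \<forall>i\<in>verts (\<alpha> - \<beta>). v i \<in> {True}}"
    by (auto simp: verts_def clique_edges_def)
  then have "Mmat n \<rho> \<beta> \<alpha> \<le> measure_pmf.prob (vdist n \<rho>) {v. \<forall>i\<in>verts (\<alpha> - \<beta>). v i \<in> {True}}"
    unfolding Mmat_def using assms(2) by (simp add: measure_pmf.finite_measure_mono)
  moreover have "verts (\<alpha> - \<beta>) \<subseteq> {1..n}"
    using verts_graph_subset[OF assms(1)] by (auto simp: verts_def)
  then have "measure_pmf.prob (vdist n \<rho>) {v. \<forall>i\<in>verts (\<alpha> - \<beta>). v i \<in> {True}} = \<rho> ^ card (verts (\<alpha> - \<beta>))"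
    using assms by (simp only: prob_vdist_coords_in) (simp add: measure_pmf_single)
  ultimately show ?thesis by simp
qed

lemma abs_cvec_le:
  assumes "finite (verts \<alpha>)" and "0 \<le> \<rho>" "\<rho> \<le> 1"
  shows "\<bar>cvec \<rho> \<alpha>\<bar> \<le> \<rho> ^ card (verts \<alpha>)"
proof -
  have "card (verts \<alpha>) \<le> card (verts \<alpha> \<union> {1})"
    using assms(1) by (intro card_mono) auto
  then show ?thesis
    using assms by (simp add: cvec_def power_decreasing)
qed

lemma wvec_empty: "wvec n \<rho> {} = \<rho>"
  by (subst wvec.simps) (simp add: Mmat_def cvec_def verts_def)

lemma abs_wvec_Mmat_le:
  assumes g: "is_graph n \<alpha>" and \<beta>: "\<beta> \<subset> \<alpha>" and \<rho>: "0 \<le> \<rho>" "\<rho> \<le> 1" and q: "1 \<le> q"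
    and IH: "\<bar>wvec n \<rho> \<beta>\<bar> \<le> real (card \<beta> + 1) ^ card \<beta> * q ^ (2 * card \<beta> ^ 2) * \<rho> ^ card (verts \<beta>)"
  shows "\<bar>wvec n \<rho> \<beta> * Mmat n \<rho> \<beta> \<alpha>\<bar>
           \<le> q ^ (2 * (card \<alpha> - 1) ^ 2) * real (card \<alpha>) ^ card \<beta> * \<rho> ^ card (verts \<alpha>)"
proof -
  have card_\<beta>: "card \<beta> < card \<alpha>"
    using \<beta> finite_graph[OF g] psubset_card_mono by blast
  have "verts \<alpha> = verts \<beta> \<union> verts (\<alpha> - \<beta>)"
    using \<beta> by (auto simp: verts_def)
  then have "card (verts \<alpha>) \<le> card (verts \<beta>) + card (verts (\<alpha> - \<beta>))"
    by (simp add: card_Un_le)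
  then have verts_split: "\<rho> ^ card (verts \<beta>) * \<rho> ^ card (verts (\<alpha> - \<beta>)) \<le> \<rho> ^ card (verts \<alpha>)"
    using \<rho> by (simp add: power_add[symmetric] power_decreasing)
  have binom: "real (card \<beta> + 1) ^ card \<beta> \<le> real (card \<alpha>) ^ card \<beta>"
    using card_\<beta> by (intro power_mono) auto
  have "card \<beta> ^ 2 \<le> (card \<alpha> - 1) ^ 2"
    using card_\<beta> by (intro power_mono) auto
  then have q_power: "q ^ (2 * card \<beta> ^ 2) \<le> q ^ (2 * (card \<alpha> - 1) ^ 2)"
    using q by (intro power_increasing) auto
  have M: "0 \<le> Mmat n \<rho> \<beta> \<alpha>" "Mmat n \<rho> \<beta> \<alpha> \<le> \<rho> ^ card (verts (\<alpha> - \<beta>))"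
    using Mmat_le[OF g _ \<rho>] \<beta> by (auto simp: Mmat_def)
  have "\<bar>wvec n \<rho> \<beta> * Mmat n \<rho> \<beta> \<alpha>\<bar>
      \<le> real (card \<beta> + 1) ^ card \<beta> * q ^ (2 * card \<beta> ^ 2) * \<rho> ^ card (verts \<beta>)
        * \<rho> ^ card (verts (\<alpha> - \<beta>))"
    using IH M \<rho> by (simp add: abs_mult mult_mono)
  also have "\<dots> \<le> real (card \<alpha>) ^ card \<beta> * q ^ (2 * (card \<alpha> - 1) ^ 2) * \<rho> ^ card (verts \<alpha>)"
    using binom q_power verts_split \<rho> q
    by (simp only: mult.assoc) (intro mult_mono; simp)
  finally show ?thesis by (simp only: mult_ac)
qed

lemma wbound_recursion:
  fixes q :: real
  assumes "1 \<le> q" and "1 \<le> k"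
  shows "(1 + q ^ (2 * (k - 1) ^ 2) * ((real k + 1) ^ k - real k ^ k)) * q ^ (2 * k)
           \<le> (real k + 1) ^ k * q ^ (2 * k ^ 2)"
proof -
  define D where "D = q ^ (2 * (k - 1) ^ 2)"
  have "1 \<le> D" and "1 \<le> real k ^ k"
    using assms by (simp_all add: D_def one_le_power)
  then have "1 \<le> D * real k ^ k"
    using mult_mono by fastforce
  then have "1 + D * ((real k + 1) ^ k - real k ^ k) \<le> D * (real k + 1) ^ k"
    by (simp add: algebra_simps)
  then have "(1 + D * ((real k + 1) ^ k - real k ^ k)) * q ^ (2 * k) \<le> D * (real k + 1) ^ k * q ^ (2 * k)"
    using assms(1) by (simp add: mult_right_mono)
  also have "\<dots> = (real k + 1) ^ k * q ^ (2 * (k - 1) ^ 2 + 2 * k)"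
    by (simp add: D_def power_add mult_ac)
  also have "\<dots> \<le> (real k + 1) ^ k * q ^ (2 * k ^ 2)"
  proof -
    have "2 * (k - 1) ^ 2 + 2 * k \<le> 2 * k ^ 2"
      using assms(2) by (cases k) (auto simp: power2_eq_square)
    then show ?thesis
      using assms(1) by (simp add: power_increasing)
  qed
  finally show ?thesis unfolding D_def .
qed

lemma abs_wvec_recursion_numerator_le:
  assumes g: "is_graph n \<alpha>" and \<rho>: "0 \<le> \<rho>" "\<rho> \<le> 1" and q: "1 \<le> q"
    and IH: "\<And>\<beta>. \<beta> \<subset> \<alpha> \<Longrightarrow>
      \<bar>wvec n \<rho> \<beta>\<bar> \<le> real (card \<beta> + 1) ^ card \<beta> * q ^ (2 * card \<beta> ^ 2) * \<rho> ^ card (verts \<beta>)"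
  shows "\<bar>cvec \<rho> \<alpha> - (\<Sum>\<beta>\<in>{\<beta>. \<beta> \<subset> \<alpha>}. wvec n \<rho> \<beta> * Mmat n \<rho> \<beta> \<alpha>)\<bar>
           \<le> (1 + q ^ (2 * (card \<alpha> - 1) ^ 2) * ((real (card \<alpha>) + 1) ^ card \<alpha> - real (card \<alpha>) ^ card \<alpha>))
              * \<rho> ^ card (verts \<alpha>)"
proof -
  define k V D where "k = card \<alpha>" and "V = card (verts \<alpha>)" and "D = q ^ (2 * (card \<alpha> - 1) ^ 2)"
  define S where "S = {\<beta>. \<beta> \<subset> \<alpha>}"
  have "\<bar>cvec \<rho> \<alpha> - (\<Sum>\<beta>\<in>S. wvec n \<rho> \<beta> * Mmat n \<rho> \<beta> \<alpha>)\<bar>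
      \<le> \<bar>cvec \<rho> \<alpha>\<bar> + (\<Sum>\<beta>\<in>S. \<bar>wvec n \<rho> \<beta> * Mmat n \<rho> \<beta> \<alpha>\<bar>)"
    by (rule order_trans[OF abs_triangle_ineq4 add_left_mono[OF sum_abs]])
  also have "\<dots> \<le> \<rho> ^ V + (\<Sum>\<beta>\<in>S. D * real k ^ card \<beta> * \<rho> ^ V)"
    using abs_cvec_le[OF finite_verts_graph[OF g] \<rho>] abs_wvec_Mmat_le[OF g _ \<rho> q IH]
    by (intro add_mono sum_mono) (auto simp: S_def V_def k_def D_def)
  also have "\<dots> = \<rho> ^ V + D * ((real k + 1) ^ k - real k ^ k) * \<rho> ^ V"
    by (simp add: S_def k_def sum_psubset_power_card[OF finite_graph[OF g]]
        flip: sum_distrib_left sum_distrib_right)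
  also have "\<dots> = (1 + D * ((real k + 1) ^ k - real k ^ k)) * \<rho> ^ V"
    by (simp add: algebra_simps)
  finally show ?thesis by (simp only: S_def k_def V_def D_def)
qed

lemma inverse_Mmat_diag_le:
  assumes "is_graph n \<alpha>" and "0 < \<rho>" "\<rho> < 1"
  shows "0 < Mmat n \<rho> \<alpha> \<alpha>" and "1 / Mmat n \<rho> \<alpha> \<alpha> \<le> (1 / (1 - \<rho>)) ^ (2 * card \<alpha>)"
proof -
  have "(1 - \<rho>) ^ (2 * card \<alpha>) \<le> (1 - \<rho>) ^ card (verts \<alpha>)"
    using assms card_verts_graph_le[OF assms(1)] by (simp add: power_decreasing)
  also have "\<dots> \<le> Mmat n \<rho> \<alpha> \<alpha>"
    using Mmat_diag_ge assms by simp
  finally have M_diag: "(1 - \<rho>) ^ (2 * card \<alpha>) \<le> Mmat n \<rho> \<alpha> \<alpha>" .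
  then show M_diag_pos: "0 < Mmat n \<rho> \<alpha> \<alpha>"
    using assms by (meson diff_gt_0_iff_gt less_le_trans zero_less_power)
  show "1 / Mmat n \<rho> \<alpha> \<alpha> \<le> (1 / (1 - \<rho>)) ^ (2 * card \<alpha>)"
    using M_diag M_diag_pos assms unfolding power_one_over by (intro divide_left_mono) auto
qed

lemma abs_wvec_le:
  assumes "is_graph n \<alpha>" and \<rho>: "0 < \<rho>" "\<rho> < 1"
  shows "\<bar>wvec n \<rho> \<alpha>\<bar>
           \<le> real (card \<alpha> + 1) ^ card \<alpha> * (1 / (1 - \<rho>)) ^ (2 * card \<alpha> ^ 2) * \<rho> ^ card (verts \<alpha>)"
  using assms(1)
proof (induction "card \<alpha>" arbitrary: \<alpha> rule: less_induct)
  case less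
  define q k V where "q = 1 / (1 - \<rho>)" and "k = card \<alpha>" and "V = card (verts \<alpha>)"
  have q: "1 \<le> q" using \<rho> by (simp add: q_def)
  show ?case
  proof (cases "\<alpha> = {}")
    case True
    then show ?thesis using wvec_empty \<rho> by (simp add: verts_def)
  next
    case False
    then have k: "1 \<le> k" using finite_graph[OF less.prems] by (simp add: k_def Suc_le_eq card_gt_0_iff)
    have IH: "\<bar>wvec n \<rho> \<beta>\<bar> \<le> real (card \<beta> + 1) ^ card \<beta> * q ^ (2 * card \<beta> ^ 2) * \<rho> ^ card (verts \<beta>)"
      if "\<beta> \<subset> \<alpha>" for \<beta>
      using that less.hyps is_graph_mono[OF less.prems] psubset_card_mono[OF finite_graph[OF less.prems]]
      by (auto simp: q_def)
    note M_diag = inverse_Mmat_diag_le[OF less.prems \<rho>]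
    have "\<bar>wvec n \<rho> \<alpha>\<bar> = \<bar>cvec \<rho> \<alpha> - (\<Sum>\<beta>\<in>{\<beta>. \<beta> \<subset> \<alpha>}. wvec n \<rho> \<beta> * Mmat n \<rho> \<beta> \<alpha>)\<bar>
                          * (1 / Mmat n \<rho> \<alpha> \<alpha>)"
      using finite_graph[OF less.prems] M_diag(1) by (subst wvec.simps) (simp del: wvec.simps)
    also have "\<dots> \<le> (1 + q ^ (2 * (k - 1) ^ 2) * ((real k + 1) ^ k - real k ^ k)) * \<rho> ^ V * q ^ (2 * k)"
      using abs_wvec_recursion_numerator_le[OF less.prems _ _ q IH] M_diag \<rho>
      by (intro mult_mono) (auto simp: k_def V_def q_def)
    also have "\<dots> \<le> (real k + 1) ^ k * q ^ (2 * k ^ 2) * \<rho> ^ V"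
      using wbound_recursion[OF q k] \<rho> by (simp add: mult.commute mult.left_commute mult_left_mono)
    finally show ?thesis by (simp add: q_def k_def V_def add.commute del: wvec.simps)
  qed
qed

theorem mainTheorem9:
  fixes n :: nat and \<rho> :: real
  assumes "n \<ge> 1" and "0 < \<rho>" and "\<rho> < 1"
  shows "wvec n \<rho> {} = \<rho> \<and>
    (\<forall>\<alpha>. is_graph n \<alpha> \<and> card \<alpha> \<ge> 1 \<longrightarrow>
       \<bar>wvec n \<rho> \<alpha>\<bar> \<le> real (card \<alpha> + 1) ^ card \<alpha> * (1 - \<rho>) powr (- 2 * real (card \<alpha>)^2)
                         * \<rho> ^ card (verts \<alpha>))"
proof -
  have "(1 - \<rho>) powr (- 2 * real k ^ 2) = (1 / (1 - \<rho>)) ^ (2 * k ^ 2)" for k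
    using assms powr_realpow[of "1 - \<rho>" "2 * k ^ 2"] by (simp add: powr_minus_divide power_one_over)
  then show ?thesis
    using wvec_empty abs_wvec_le assms by auto
qed

end
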